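(* Every graph $G$ that is self-complementary, edge-transitive and vertex-transitive satisfies $\operatorname{tww}(G)=\operatorname{lb}_1(G)$.
   Context: All graphs are finite and simple. A graph is self-complementary if it is isomorphic to its complement, and vertex-transitive (edge-transitive) if its automorphism group acts transitively on its vertices (edges). A trigraph is a graph whose edges are each colored red or black; a graph is viewed as a trigraph with all edges black; the red degree of a vertex is the number of red edges incident to it. For a partition $\mathcal{P}$ of $V(G)$, the quotient trigraph $G/\mathcal{P}$ has vertex set $\mathcal{P}$; two distinct parts $U,W$ are joined by a black edge if every pair $\{u,w\}$ with $u\in U,w\in W$ is a black edge of $G$, are non-adjacent if no such pair is an edge, and are joined by a red edge otherwise. A contraction sequence of an $n$-vertex trigraph $G$ is a sequence $\mathcal{P}_n,\dots,\mathcal{P}_1$ of partitions of $V(G)$ where $\mathcal{P}_n$ is the partition into singletons and each $\mathcal{P}_i$ arises from $\mathcal{P}_{i+1}$ by merging two parts; its width is the maximum red degree over all $G/\mathcal{P}_i$, and $\operatorname{tww}(G)$ is the minimum width of a contraction sequence. For $|V(G)|\geq 2$, $\operatorname{lb}_1(G)$ is the minimum over all 2-element subsets $\{u,v\}\subseteq V(G)$ of the maximum red degree of $G/\mathcal{P}$ where $\mathcal{P}$ has $\{u,v\}$ as its only non-singleton part; $\operatorname{lb}_1(G)=0$ if $|V(G)|=1$. (A graph with $\operatorname{tww}(G)=\operatorname{lb}_1(G)$ is called $\operatorname{lb}_1$-collapsible.) *)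

theory Defs
  imports Main "HOL-Library.Disjoint_Sets"
begin

definition simple_graph :: "'a set \<Rightarrow> 'a set set \<Rightarrow> bool" where
  "simple_graph V E \<longleftrightarrow> finite V \<and> (\<forall>e\<in>E. e \<subseteq> V \<and> card e = 2)"

definition complement_edges :: "'a set \<Rightarrow> 'a set set \<Rightarrow> 'a set set" where
  "complement_edges V E = {e. e \<subseteq> V \<and> card e = 2} - E"

definition graph_iso :: "'a set \<Rightarrow> 'a set set \<Rightarrow> 'b set \<Rightarrow> 'b set set \<Rightarrow> ('a \<Rightarrow> 'b) \<Rightarrow> bool" where
  "graph_iso V E V' E' f \<longleftrightarrow> bij_betw f V V' \<and>
     (\<forall>u\<in>V. \<forall>v\<in>V. {u, v} \<in> E \<longleftrightarrow> {f u, f v} \<in> E')"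

definition self_complementary :: "'a set \<Rightarrow> 'a set set \<Rightarrow> bool" where
  "self_complementary V E \<longleftrightarrow> (\<exists>f. graph_iso V E V (complement_edges V E) f)"

definition automorphism :: "'a set \<Rightarrow> 'a set set \<Rightarrow> ('a \<Rightarrow> 'a) \<Rightarrow> bool" where
  "automorphism V E f \<longleftrightarrow> graph_iso V E V E f"

definition vertex_transitive :: "'a set \<Rightarrow> 'a set set \<Rightarrow> bool" where
  "vertex_transitive V E \<longleftrightarrow> (\<forall>u\<in>V. \<forall>v\<in>V. \<exists>f. automorphism V E f \<and> f u = v)"

definition edge_transitive :: "'a set \<Rightarrow> 'a set set \<Rightarrow> bool" where
  "edge_transitive V E \<longleftrightarrow> (\<forall>e1\<in>E. \<forall>e2\<in>E. \<exists>f. automorphism V E f \<and> f ` e1 = e2)"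

definition red_edge :: "'a set set \<Rightarrow> 'a set \<Rightarrow> 'a set \<Rightarrow> bool" where
  "red_edge E U W \<longleftrightarrow> (\<exists>u\<in>U. \<exists>w\<in>W. {u, w} \<in> E) \<and> (\<exists>u\<in>U. \<exists>w\<in>W. {u, w} \<notin> E)"

definition red_degree :: "'a set set \<Rightarrow> 'a set set \<Rightarrow> 'a set \<Rightarrow> nat" where
  "red_degree E P U = card {W \<in> P. W \<noteq> U \<and> red_edge E U W}"

definition max_red_degree :: "'a set set \<Rightarrow> 'a set set \<Rightarrow> nat" where
  "max_red_degree E P = Max (insert 0 (red_degree E P ` P))"

definition singletons :: "'a set \<Rightarrow> 'a set set" where
  "singletons V = (\<lambda>x. {x}) ` V"

definition merge_step :: "'a set set \<Rightarrow> 'a set set \<Rightarrow> bool" where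
  "merge_step P Q \<longleftrightarrow> (\<exists>U\<in>P. \<exists>W\<in>P. U \<noteq> W \<and> Q = insert (U \<union> W) (P - {U, W}))"

(* A contraction sequence P_n, ..., P_1 is represented by the list
   [P_n, ..., P_1] of length n = |V(G)|. *)
definition contraction_sequence :: "'a set \<Rightarrow> 'a set set list \<Rightarrow> bool" where
  "contraction_sequence V Ps \<longleftrightarrow>
     length Ps = card V \<and>
     (\<forall>i < length Ps. partition_on V (Ps ! i)) \<and>
     (Ps \<noteq> [] \<longrightarrow> Ps ! 0 = singletons V) \<and>
     (\<forall>i. Suc i < length Ps \<longrightarrow> merge_step (Ps ! i) (Ps ! Suc i))"

definition seq_width :: "'a set set \<Rightarrow> 'a set set list \<Rightarrow> nat" where
  "seq_width E Ps = Max (insert 0 (set (map (max_red_degree E) Ps)))"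

definition tww :: "'a set \<Rightarrow> 'a set set \<Rightarrow> nat" where
  "tww V E = Min {seq_width E Ps | Ps. contraction_sequence V Ps}"

definition lb1 :: "'a set \<Rightarrow> 'a set set \<Rightarrow> nat" where
  "lb1 V E = (if card V < 2 then 0 else
     Min {max_red_degree E (insert {u, v} (singletons (V - {u, v}))) | u v. u \<in> V \<and> v \<in> V \<and> u \<noteq> v})"

end

theory Submission
  imports Defs "HOL-Combinatorics.Orbits"
begin

text \<open>
  Let \<open>n = |V|\<close>. An antimorphism composed with automorphisms maps any vertex to any other,
  so the neighbourhood and the non-neighbourhood of every vertex have the same size \<open>n div 2\<close>.
  Automorphisms and antimorphisms also map pairs of vertices onto edges, hence by edge-transitivity
  the number of vertices distinguishing \<open>u\<close> from \<open>v\<close> is the same for all pairs, and double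
  counting shows that it is \<open>n div 2\<close> again. Contracting \<open>u\<close> and \<open>v\<close> creates a red edge
  towards each of them, so \<open>n div 2 \<le> lb1 \<le> tww\<close>.

  Conversely, take an antimorphism \<open>s\<close> fixing a vertex \<open>w\<close>. Every other cycle of \<open>s\<close> has length
  divisible by 4: otherwise an odd power of \<open>s\<close>, again an antimorphism, would fix or swap the ends of
  some pair. So \<open>V - {w}\<close> splits as \<open>X \<union> g ` X\<close> with \<open>g = s \<circ> s\<close> an automorphism. Contracting the
  pairs \<open>{x, g x}\<close> one at a time keeps all red degrees at most \<open>n div 2\<close>: a pair is red only
  towards parts containing a vertex that distinguishes \<open>x\<close> from \<open>g x\<close>, and a singleton only towards
  pairs, of which there are at most \<open>|X| = n div 2\<close>. After that only \<open>n div 2 + 1\<close> parts are left.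
\<close>

section \<open>Neighbourhoods and distinguishing vertices\<close>

definition signed_neighbours :: "'a set \<Rightarrow> 'a set set \<Rightarrow> bool \<Rightarrow> 'a \<Rightarrow> 'a set" where
  "signed_neighbours V E b x = {y \<in> V. y \<noteq> x \<and> ({x, y} \<in> E \<longleftrightarrow> b)}"

definition distinguishers :: "'a set \<Rightarrow> 'a set set \<Rightarrow> 'a \<Rightarrow> 'a \<Rightarrow> 'a set" where
  "distinguishers V E u v = {z \<in> V. z \<noteq> u \<and> z \<noteq> v \<and> ({u, z} \<in> E) \<noteq> ({v, z} \<in> E)}"

lemma distinguishers_commute: "distinguishers V E u v = distinguishers V E v u"
  by (auto simp: distinguishers_def)

lemma signed_neighbours_Un: "signed_neighbours V E True x \<union> signed_neighbours V E False x = V - {x}"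
  by (auto simp: signed_neighbours_def)

lemma signed_neighbours_Int: "signed_neighbours V E True x \<inter> signed_neighbours V E False x = {}"
  by (auto simp: signed_neighbours_def)

lemma distinguishers_transpose:
  assumes "z \<in> V - {u}"
  shows "{y \<in> V - {u}. z \<in> distinguishers V E u y} = signed_neighbours V E ({u, z} \<notin> E) z"
  using assms by (auto simp: distinguishers_def signed_neighbours_def insert_commute)

lemma sum_card_Collect_swap:
  assumes "finite A" "finite B"
  shows "(\<Sum>a\<in>A. card {b \<in> B. R a b}) = (\<Sum>b\<in>B. card {a \<in> A. R a b})"
proof -
  have "(\<Sum>a\<in>A. card {b \<in> B. R a b}) = (\<Sum>a\<in>A. \<Sum>b\<in>B. if R a b then 1 else 0)"
    using assms by (simp add: sum.inter_filter[symmetric])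
  also have "\<dots> = (\<Sum>b\<in>B. \<Sum>a\<in>A. if R a b then 1 else 0)"
    by (rule sum.swap)
  also have "\<dots> = (\<Sum>b\<in>B. card {a \<in> A. R a b})"
    using assms by (simp add: sum.inter_filter[symmetric])
  finally show ?thesis .
qed

lemma sum_card_distinguishers:
  assumes "finite V"
  shows "(\<Sum>y\<in>V - {u}. card (distinguishers V E u y))
    = (\<Sum>z\<in>V - {u}. card (signed_neighbours V E ({u, z} \<notin> E) z))"
proof -
  have "distinguishers V E u y = {z \<in> V - {u}. z \<in> distinguishers V E u y}" for y
    by (auto simp: distinguishers_def)
  then have "(\<Sum>y\<in>V - {u}. card (distinguishers V E u y))
      = (\<Sum>y\<in>V - {u}. card {z \<in> V - {u}. z \<in> distinguishers V E u y})"
    by simp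
  also have "\<dots> = (\<Sum>z\<in>V - {u}. card {y \<in> V - {u}. z \<in> distinguishers V E u y})"
    using assms by (intro sum_card_Collect_swap) auto
  also have "\<dots> = (\<Sum>z\<in>V - {u}. card (signed_neighbours V E ({u, z} \<notin> E) z))"
    by (intro sum.cong refl) (simp only: distinguishers_transpose)
  finally show ?thesis .
qed

section \<open>Automorphisms and antimorphisms\<close>

(* For b = False: an antimorphism, i.e. an isomorphism onto the complement. *)
definition signed_automorphism :: "'a set \<Rightarrow> 'a set set \<Rightarrow> bool \<Rightarrow> ('a \<Rightarrow> 'a) \<Rightarrow> bool" where
  "signed_automorphism V E b f \<longleftrightarrow> bij_betw f V V \<and>
     (\<forall>u\<in>V. \<forall>v\<in>V. u \<noteq> v \<longrightarrow> ({f u, f v} \<in> E \<longleftrightarrow> ({u, v} \<in> E \<longleftrightarrow> b)))"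

lemma automorphism_imp_signed_automorphism:
  "automorphism V E f \<Longrightarrow> signed_automorphism V E True f"
  by (simp add: automorphism_def graph_iso_def signed_automorphism_def)

lemma iso_complement_imp_signed_automorphism:
  assumes "graph_iso V E V (complement_edges V E) f"
  shows "signed_automorphism V E False f"
proof -
  have bij: "bij_betw f V V" using assms by (simp add: graph_iso_def)
  have "{f u, f v} \<in> E \<longleftrightarrow> ({u, v} \<in> E \<longleftrightarrow> False)" if "u \<in> V" "v \<in> V" "u \<noteq> v" for u v
  proof -
    have "f u \<noteq> f v" using bij that by (metis bij_betw_def inj_onD)
    moreover have "f u \<in> V" "f v \<in> V" using bij that by (auto dest: bij_betwE)
    ultimately have "{f u, f v} \<in> complement_edges V E \<longleftrightarrow> {f u, f v} \<notin> E"
      by (auto simp: complement_edges_def card_insert_if)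
    then show ?thesis using assms that by (auto simp: graph_iso_def)
  qed
  then show ?thesis using bij by (simp add: signed_automorphism_def)
qed

context
  fixes V :: "'a set" and E :: "'a set set" and b :: bool and f :: "'a \<Rightarrow> 'a"
  assumes f: "signed_automorphism V E b f"
begin

lemma signed_automorphism_bij: "bij_betw f V V"
  using f by (simp add: signed_automorphism_def)

lemma signed_automorphism_in: "x \<in> V \<Longrightarrow> f x \<in> V"
  using signed_automorphism_bij by (auto dest: bij_betwE)

lemma signed_automorphism_image: "f ` V = V"
  using signed_automorphism_bij by (simp add: bij_betw_def)

lemma signed_automorphism_eq_iff: "x \<in> V \<Longrightarrow> y \<in> V \<Longrightarrow> f x = f y \<longleftrightarrow> x = y"
  using signed_automorphism_bij by (metis bij_betw_imp_inj_on inj_on_eq_iff)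

lemma signed_automorphism_edge_iff:
  "u \<in> V \<Longrightarrow> v \<in> V \<Longrightarrow> u \<noteq> v \<Longrightarrow> {f u, f v} \<in> E \<longleftrightarrow> ({u, v} \<in> E \<longleftrightarrow> b)"
  using f by (simp add: signed_automorphism_def)

lemma signed_automorphism_card_image: "A \<subseteq> V \<Longrightarrow> card (f ` A) = card A"
  using signed_automorphism_bij by (meson bij_betw_def card_image inj_on_subset)

lemma signed_automorphism_Collect: "{z \<in> V. P z} = f ` {y \<in> V. P (f y)}"
proof
  show "{z \<in> V. P z} \<subseteq> f ` {y \<in> V. P (f y)}"
  proof
    fix z assume z: "z \<in> {z \<in> V. P z}"
    then obtain y where "y \<in> V" "z = f y" using signed_automorphism_image by blast
    then show "z \<in> f ` {y \<in> V. P (f y)}" using z by blast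
  qed
qed (use signed_automorphism_in in auto)

lemma signed_automorphism_signed_neighbours:
  assumes "x \<in> V"
  shows "signed_neighbours V E c (f x) = f ` signed_neighbours V E (b = c) x"
  unfolding signed_neighbours_def
  by (subst signed_automorphism_Collect)
    (use assms signed_automorphism_eq_iff signed_automorphism_edge_iff in auto)

lemma signed_automorphism_distinguishers:
  assumes "u \<in> V" "v \<in> V" "u \<noteq> v"
  shows "distinguishers V E (f u) (f v) = f ` distinguishers V E u v"
  unfolding distinguishers_def
  by (subst signed_automorphism_Collect)
    (use assms signed_automorphism_eq_iff signed_automorphism_edge_iff in auto)

end

lemma signed_automorphism_comp:
  assumes f: "signed_automorphism V E a f" and g: "signed_automorphism V E b g"
  shows "signed_automorphism V E (a = b) (g \<circ> f)"
  unfolding signed_automorphism_def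
proof (intro conjI ballI impI)
  show "bij_betw (g \<circ> f) V V"
    using f g by (meson bij_betw_trans signed_automorphism_bij)
  fix u v assume "u \<in> V" "v \<in> V" "u \<noteq> v"
  then show "{(g \<circ> f) u, (g \<circ> f) v} \<in> E \<longleftrightarrow> ({u, v} \<in> E \<longleftrightarrow> a = b)"
    using signed_automorphism_edge_iff[OF g, of "f u" "f v"] signed_automorphism_edge_iff[OF f]
      signed_automorphism_in[OF f] signed_automorphism_eq_iff[OF f] by auto
qed

lemma signed_automorphism_funpow:
  assumes "signed_automorphism V E False f"
  shows "signed_automorphism V E (even n) (f ^^ n)"
proof (induction n)
  case 0
  show ?case using bij_betw_id by (simp add: signed_automorphism_def id_def)
next
  case (Suc n)
  from signed_automorphism_comp[OF Suc assms] show ?case by (simp add: comp_def)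
qed

lemma signed_automorphism_cong:
  assumes "signed_automorphism V E b f" "\<And>x. x \<in> V \<Longrightarrow> f x = g x"
  shows "signed_automorphism V E b g"
proof -
  have "bij_betw g V V"
    using assms bij_betw_cong signed_automorphism_bij by blast
  then show ?thesis using assms by (simp add: signed_automorphism_def)
qed

section \<open>Merging two parts of a partition\<close>

lemma two_le_card_obtains:
  assumes "2 \<le> card A"
  obtains a b where "a \<in> A" "b \<in> A" "a \<noteq> b"
  using assms by (auto simp: numeral_2_eq_2 card_le_Suc_iff)

lemma partition_on_merge:
  assumes P: "partition_on V P" and UW: "U \<in> P" "W \<in> P" "U \<noteq> W"
  shows "partition_on V (insert (U \<union> W) (P - {U, W}))"
proof (rule partition_onI)
  have disj: "disjnt A B" if "A \<in> P" "B \<in> P" "A \<noteq> B" for A B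
    using P that by (meson partition_onD2 pairwiseD)
  show "\<Union>(insert (U \<union> W) (P - {U, W})) = V"
    using partition_onD1[OF P] UW by blast
  show "{} \<notin> insert (U \<union> W) (P - {U, W})"
    using partition_onD3[OF P] UW by blast
  fix A B
  assume "A \<in> insert (U \<union> W) (P - {U, W})" "B \<in> insert (U \<union> W) (P - {U, W})" "A \<noteq> B"
  then consider "A = U \<union> W" "B \<in> P - {U, W}" | "B = U \<union> W" "A \<in> P - {U, W}" | "A \<in> P" "B \<in> P"
    by blast
  then show "disjnt A B"
  proof cases
    case 1
    then have "disjnt U B" "disjnt W B" using disj UW by (metis DiffE insertCI)+
    then show ?thesis using 1 by simp
  next
    case 2
    then have "disjnt A U" "disjnt A W" using disj UW by (metis DiffE insertCI)+
    then show ?thesis using 2 by simp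
  qed (use disj \<open>A \<noteq> B\<close> in simp)
qed

lemma merge_stepI: "U \<in> P \<Longrightarrow> W \<in> P \<Longrightarrow> U \<noteq> W \<Longrightarrow> merge_step P (insert (U \<union> W) (P - {U, W}))"
  unfolding merge_step_def by blast

lemma card_merge:
  assumes P: "partition_on V P" "finite P" and UW: "U \<in> P" "W \<in> P" "U \<noteq> W"
  shows "card (insert (U \<union> W) (P - {U, W})) = card P - 1"
proof -
  have "U \<union> W \<notin> P - {U, W}"
  proof
    assume "U \<union> W \<in> P - {U, W}"
    then have "disjnt U (U \<union> W)" using P UW by (metis DiffD1 DiffD2 insertCI partition_onD2 pairwiseD)
    then show False using partition_onD3[OF P(1)] UW by (auto simp: disjnt_def)
  qed
  moreover have "card {U, W} \<le> card P" by (rule card_mono) (use P(2) UW in auto)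
  ultimately show ?thesis using P(2) UW by (simp add: card_Diff_subset)
qed

lemma card_parts_meeting_le:
  assumes P: "partition_on V P" and M: "finite M"
  shows "card {W \<in> P. W \<inter> M \<noteq> {}} \<le> card M"
proof -
  define pick where "pick W = (SOME z. z \<in> W \<inter> M)" for W
  have pick: "pick W \<in> W \<inter> M" if "W \<inter> M \<noteq> {}" for W
    unfolding pick_def using that by (meson ex_in_conv someI)
  have "inj_on pick {W \<in> P. W \<inter> M \<noteq> {}}"
  proof (rule inj_onI)
    fix A B
    assume A: "A \<in> {W \<in> P. W \<inter> M \<noteq> {}}" and B: "B \<in> {W \<in> P. W \<inter> M \<noteq> {}}"
      and eq: "pick A = pick B"
    have "pick A \<in> A" "pick B \<in> B" using A B pick by auto
    then have "\<not> disjnt A B" using eq by (auto simp: disjnt_def)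
    then show "A = B" using A B partition_onD2[OF P] unfolding pairwise_def by blast
  qed
  moreover have "pick ` {W \<in> P. W \<inter> M \<noteq> {}} \<subseteq> M" using pick by auto
  ultimately show ?thesis using card_inj_on_le M by blast
qed

lemma red_degree_le_card:
  assumes "finite P" "U \<in> P"
  shows "red_degree E P U \<le> card P - 1"
proof -
  have "red_degree E P U \<le> card (P - {U})"
    unfolding red_degree_def by (rule card_mono) (use assms in auto)
  then show ?thesis using assms by simp
qed

lemma max_red_degree_le:
  "finite P \<Longrightarrow> (\<And>U. U \<in> P \<Longrightarrow> red_degree E P U \<le> k) \<Longrightarrow> max_red_degree E P \<le> k"
  unfolding max_red_degree_def by simp

lemma card_distinguishers_le_max_red_degree:
  assumes "finite V" "u \<in> V" "v \<in> V" "u \<noteq> v"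
  shows "card (distinguishers V E u v) \<le> max_red_degree E (insert {u, v} (singletons (V - {u, v})))"
    (is "_ \<le> max_red_degree E ?P")
proof -
  have fin: "finite ?P" using assms by (simp add: singletons_def)
  have "(\<lambda>z. {z}) ` distinguishers V E u v \<subseteq> {W \<in> ?P. W \<noteq> {u, v} \<and> red_edge E {u, v} W}"
    using assms by (auto simp: distinguishers_def singletons_def red_edge_def)
  then have "card ((\<lambda>z. {z}) ` distinguishers V E u v) \<le> red_degree E ?P {u, v}"
    unfolding red_degree_def by (rule card_mono[rotated]) (use fin in simp)
  also have "\<dots> \<le> max_red_degree E ?P"
    unfolding max_red_degree_def using fin by (intro Max_ge) auto
  finally show ?thesis by (simp add: card_image)
qed

section \<open>Contraction sequences\<close>

lemma merge_chain_from_invariant: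
  assumes V: "finite V" "V \<noteq> {}"
    and inv_partition: "\<And>P. I P \<Longrightarrow> partition_on V P"
    and inv_step: "\<And>P. I P \<Longrightarrow> 2 \<le> card P \<Longrightarrow> \<exists>Q. I Q \<and> merge_step P Q"
  shows "I P \<Longrightarrow> \<exists>Ps. length Ps = card P \<and> Ps ! 0 = P \<and> set Ps \<subseteq> Collect I \<and>
    (\<forall>i. Suc i < length Ps \<longrightarrow> merge_step (Ps ! i) (Ps ! Suc i))"
proof (induction "card P" arbitrary: P rule: less_induct)
  case less
  have P: "partition_on V P" "finite P" using inv_partition[OF less.prems] finite_elements V by blast+
  then have "P \<noteq> {}" using V(2) by (auto simp: partition_on_def)
  then consider "card P = 1" | "2 \<le> card P" using P(2) by (metis One_nat_def card_0_eq less_2_cases not_le)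
  then show ?case
  proof cases
    case 1
    then show ?thesis using less.prems by (intro exI[of _ "[P]"]) simp
  next
    case 2
    obtain Q where Q: "I Q" "merge_step P Q" using inv_step[OF less.prems 2] by blast
    obtain U W where "U \<in> P" "W \<in> P" "U \<noteq> W" "Q = insert (U \<union> W) (P - {U, W})"
      using Q(2) unfolding merge_step_def by blast
    then have "card Q = card P - 1" using card_merge[OF P] by blast
    then obtain Qs where Qs: "length Qs = card Q" "Qs ! 0 = Q" "set Qs \<subseteq> Collect I"
      "\<forall>i. Suc i < length Qs \<longrightarrow> merge_step (Qs ! i) (Qs ! Suc i)"
      using less.hyps[OF _ Q(1)] 2 by auto
    have "\<forall>i. Suc i < length (P # Qs) \<longrightarrow> merge_step ((P # Qs) ! i) ((P # Qs) ! Suc i)"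
    proof (intro allI impI)
      fix i assume "Suc i < length (P # Qs)"
      then show "merge_step ((P # Qs) ! i) ((P # Qs) ! Suc i)"
        using Qs(2,4) Q(2) by (cases i) auto
    qed
    then show ?thesis
      using Qs \<open>card Q = card P - 1\<close> 2 less.prems by (intro exI[of _ "P # Qs"]) auto
  qed
qed

lemma exists_contraction_sequence_from_invariant:
  assumes V: "finite V" and init: "I (singletons V)"
    and inv_partition: "\<And>P. I P \<Longrightarrow> partition_on V P"
    and inv_width: "\<And>P. I P \<Longrightarrow> max_red_degree E P \<le> k"
    and inv_step: "\<And>P. I P \<Longrightarrow> 2 \<le> card P \<Longrightarrow> \<exists>Q. I Q \<and> merge_step P Q"
  shows "\<exists>Ps. contraction_sequence V Ps \<and> seq_width E Ps \<le> k"
proof (cases "V = {}")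
  case True
  then show ?thesis by (intro exI[of _ "[]"]) (simp add: contraction_sequence_def seq_width_def)
next
  case False
  then obtain Ps where Ps: "length Ps = card (singletons V)" "Ps ! 0 = singletons V"
    "set Ps \<subseteq> Collect I" "\<forall>i. Suc i < length Ps \<longrightarrow> merge_step (Ps ! i) (Ps ! Suc i)"
    using merge_chain_from_invariant[OF V False inv_partition inv_step init] by blast
  have "card (singletons V) = card V" by (simp add: singletons_def card_image)
  moreover have "\<forall>i<length Ps. partition_on V (Ps ! i)"
    by (meson Ps(3) inv_partition mem_Collect_eq nth_mem subsetD)
  ultimately have "contraction_sequence V Ps"
    using Ps unfolding contraction_sequence_def by simp
  moreover have "seq_width E Ps \<le> k"
    using Ps(3) inv_width by (auto simp: seq_width_def)
  ultimately show ?thesis by blast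
qed

lemma finite_contraction_widths:
  assumes "finite V"
  shows "finite {seq_width E Ps | Ps. contraction_sequence V Ps}"
proof -
  have "{Ps. contraction_sequence V Ps} \<subseteq> {Ps. set Ps \<subseteq> {P. partition_on V P} \<and> length Ps = card V}"
    by (auto simp: contraction_sequence_def in_set_conv_nth)
  then have "finite {Ps. contraction_sequence V Ps}"
    using finite_lists_length_eq[OF finitely_many_partition_on[OF assms]] finite_subset by blast
  then show ?thesis by (simp add: setcompr_eq_image)
qed

lemma tww_le_seq_width:
  assumes "finite V" "contraction_sequence V Ps"
  shows "tww V E \<le> seq_width E Ps"
proof -
  have "seq_width E Ps \<in> {seq_width E Ps | Ps. contraction_sequence V Ps}" using assms(2) by blast
  then show ?thesis unfolding tww_def using finite_contraction_widths[OF assms(1)] by simp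
qed

lemma max_red_degree_le_seq_width: "P \<in> set Ps \<Longrightarrow> max_red_degree E P \<le> seq_width E Ps"
  unfolding seq_width_def by simp

lemma merge_step_singletons:
  assumes "merge_step (singletons V) Q"
  obtains a b where "a \<in> V" "b \<in> V" "a \<noteq> b" "Q = insert {a, b} (singletons (V - {a, b}))"
proof -
  obtain a b where "a \<in> V" "b \<in> V" "a \<noteq> b" "Q = insert {a, b} (singletons V - {{a}, {b}})"
    using assms by (auto simp: merge_step_def singletons_def)
  moreover have "singletons V - {{a}, {b}} = singletons (V - {a, b})"
    by (auto simp: singletons_def)
  ultimately show ?thesis using that by simp
qed

lemma finite_single_merge_widths:
  assumes "finite V"
  shows "finite {max_red_degree E (insert {u, v} (singletons (V - {u, v}))) | u v.
    u \<in> V \<and> v \<in> V \<and> u \<noteq> v}"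
proof -
  have "{max_red_degree E (insert {u, v} (singletons (V - {u, v}))) | u v. u \<in> V \<and> v \<in> V \<and> u \<noteq> v}
    \<subseteq> (\<lambda>(u, v). max_red_degree E (insert {u, v} (singletons (V - {u, v})))) ` (V \<times> V)"
    by auto
  then show ?thesis using assms finite_subset by blast
qed

lemma lb1_le_single_merge:
  assumes "finite V" "a \<in> V" "b \<in> V" "a \<noteq> b"
  shows "lb1 V E \<le> max_red_degree E (insert {a, b} (singletons (V - {a, b})))"
proof -
  have "card {a, b} \<le> card V" using assms by (intro card_mono) auto
  then show ?thesis
    using assms finite_single_merge_widths[OF assms(1)] unfolding lb1_def by (auto intro: Min_le)
qed

lemma le_lb1I:
  assumes V: "2 \<le> card V"
    and k: "\<And>u v. u \<in> V \<Longrightarrow> v \<in> V \<Longrightarrow> u \<noteq> v \<Longrightarrow> k \<le> card (distinguishers V E u v)"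
  shows "k \<le> lb1 V E"
proof -
  define S where "S = {max_red_degree E (insert {u, v} (singletons (V - {u, v}))) | u v.
    u \<in> V \<and> v \<in> V \<and> u \<noteq> v}"
  have "finite V" using V card.infinite by force
  obtain a b where "a \<in> V" "b \<in> V" "a \<noteq> b" using V by (rule two_le_card_obtains)
  then have "S \<noteq> {}" unfolding S_def by blast
  moreover have "finite S" unfolding S_def by (rule finite_single_merge_widths[OF \<open>finite V\<close>])
  moreover have "k \<le> m" if "m \<in> S" for m
  proof -
    obtain u v where "u \<in> V" "v \<in> V" "u \<noteq> v"
      and m: "m = max_red_degree E (insert {u, v} (singletons (V - {u, v})))"
      using \<open>m \<in> S\<close> unfolding S_def by blast
    then show ?thesis
      using k card_distinguishers_le_max_red_degree[OF \<open>finite V\<close>] order_trans by metis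
  qed
  ultimately have "k \<le> Min S" by (intro Min.boundedI)
  then show ?thesis using V by (simp add: lb1_def S_def)
qed

lemma lb1_le_tww:
  assumes V: "2 \<le> card V" and Ps: "contraction_sequence V Ps"
  shows "lb1 V E \<le> tww V E"
  unfolding tww_def
proof (rule Min.boundedI)
  have "finite V" using V card.infinite by force
  then show "finite {seq_width E Ps | Ps. contraction_sequence V Ps}"
    by (rule finite_contraction_widths)
  show "{seq_width E Ps | Ps. contraction_sequence V Ps} \<noteq> {}" using Ps by blast
  fix w assume "w \<in> {seq_width E Ps | Ps. contraction_sequence V Ps}"
  then obtain Qs where Qs: "contraction_sequence V Qs" "w = seq_width E Qs" by blast
  then have "length Qs = card V" "Qs ! 0 = singletons V" "merge_step (Qs ! 0) (Qs ! 1)"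
    using V by (auto simp: contraction_sequence_def)
  then obtain a b where ab: "a \<in> V" "b \<in> V" "a \<noteq> b"
    and Q1: "Qs ! 1 = insert {a, b} (singletons (V - {a, b}))"
    by (metis merge_step_singletons)
  have "lb1 V E \<le> max_red_degree E (Qs ! 1)"
    unfolding Q1 using lb1_le_single_merge[OF \<open>finite V\<close> ab] .
  also have "\<dots> \<le> w"
    unfolding Qs(2) using \<open>length Qs = card V\<close> V by (intro max_red_degree_le_seq_width) simp
  finally show "lb1 V E \<le> w" .
qed

section \<open>Cycles of length divisible by four\<close>

lemma image_Suc_Suc_mod_4:
  assumes "4 dvd p"
  shows "(\<lambda>n. Suc (Suc n)) ` {n. n < p \<and> n mod 4 < 2} = {n. n < p \<and> \<not> n mod 4 < 2}"
proof
  show "(\<lambda>n. Suc (Suc n)) ` {n. n < p \<and> n mod 4 < 2} \<subseteq> {n. n < p \<and> \<not> n mod 4 < 2}"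
  proof
    fix m assume "m \<in> (\<lambda>n. Suc (Suc n)) ` {n. n < p \<and> n mod 4 < 2}"
    then obtain n where n: "n < p" "n mod 4 < 2" and m: "m = Suc (Suc n)" by blast
    have "Suc (Suc n) < p" "\<not> Suc (Suc n) mod 4 < 2" using n assms by presburger+
    then show "m \<in> {n. n < p \<and> \<not> n mod 4 < 2}" by (simp add: m)
  qed
  show "{n. n < p \<and> \<not> n mod 4 < 2} \<subseteq> (\<lambda>n. Suc (Suc n)) ` {n. n < p \<and> n mod 4 < 2}"
  proof
    fix m assume "m \<in> {n. n < p \<and> \<not> n mod 4 < 2}"
    then have m: "m < p" "\<not> m mod 4 < 2" by simp_all
    then have "2 \<le> m" by presburger
    then obtain k where k: "m = Suc (Suc k)" by (metis add_2_eq_Suc le_Suc_ex)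
    have "k mod 4 < 2" using m(2) unfolding k by presburger
    then show "m \<in> (\<lambda>n. Suc (Suc n)) ` {n. n < p \<and> n mod 4 < 2}"
      using m(1) k by (intro image_eqI[of m _ k]) simp_all
  qed
qed

lemma exists_square_transversal_orbit:
  assumes s: "permutation s" and p4: "4 dvd funpow_dist1 s x x"
  shows "\<exists>X. X \<inter> (s \<circ> s) ` X = {} \<and> X \<union> (s \<circ> s) ` X = orbit s x"
proof -
  define p where "p = funpow_dist1 s x x"
  define f where "f n = (s ^^ n) x" for n
  define A where "A = {n. n < p \<and> n mod 4 < 2}"
  define B where "B = {n. n < p \<and> \<not> n mod 4 < 2}"
  have "4 dvd p" using p4 by (simp add: p_def)
  have x: "x \<in> orbit s x" using s by (rule permutation_self_in_orbit)
  have orb: "orbit s x = f ` {0..<p}"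
    unfolding f_def p_def by (rule orbit_conv_funpow_dist1[OF x])
  have inj: "inj_on f {0..<p}"
    unfolding f_def p_def by (rule inj_on_funpow_dist1[OF x])
  have "(\<lambda>n. Suc (Suc n)) ` A = B"
    unfolding A_def B_def using \<open>4 dvd p\<close> by (rule image_Suc_Suc_mod_4)
  moreover have "(s \<circ> s) ` f ` A = f ` (\<lambda>n. Suc (Suc n)) ` A"
    by (simp add: image_image f_def)
  ultimately have square: "(s \<circ> s) ` f ` A = f ` B" by simp
  have AB: "A \<subseteq> {0..<p}" "B \<subseteq> {0..<p}" "A \<inter> B = {}" "A \<union> B = {0..<p}"
    unfolding A_def B_def by auto
  have "f ` A \<inter> f ` B = {}" using inj_on_image_Int[OF inj AB(1,2)] AB(3) by simp
  moreover have "f ` A \<union> f ` B = orbit s x" using AB(4) orb by (simp add: image_Un[symmetric])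
  ultimately show ?thesis unfolding square[symmetric] by blast
qed

lemma orbit_subset_invariant:
  assumes "s ` S \<subseteq> S" "x \<in> S"
  shows "orbit s x \<subseteq> S"
proof
  fix y assume "y \<in> orbit s x"
  then show "y \<in> S" by (induct rule: orbit.induct) (use assms in auto)
qed

lemma image_orbit_permutation:
  assumes s: "permutation s"
  shows "s ` orbit s x = orbit s x"
proof -
  have "s ` orbit s x \<subseteq> orbit s x" by (simp add: image_subset_iff orbit.step)
  moreover have "finite (orbit s x)" by (rule finite_orbit[OF permutation_self_in_orbit[OF s]])
  moreover have "inj_on s (orbit s x)"
    using s permutation_bijective bij_is_inj inj_on_subset by blast
  ultimately show ?thesis by (metis card_image card_subset_eq)
qed

lemma exists_square_transversal:
  assumes s: "permutation s" and "finite S" "s ` S = S" "\<forall>x\<in>S. 4 dvd funpow_dist1 s x x"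
  shows "\<exists>X. X \<inter> (s \<circ> s) ` X = {} \<and> X \<union> (s \<circ> s) ` X = S"
  using assms(2-4)
proof (induction "card S" arbitrary: S rule: less_induct)
  case less
  show ?case
  proof (cases "S = {}")
    case True
    then show ?thesis by simp
  next
    case False
    then obtain x where x: "x \<in> S" by blast
    define C where "C = orbit s x"
    have "C \<subseteq> S" unfolding C_def using orbit_subset_invariant[of s S x] less.prems(2) x by simp
    have "x \<in> C" unfolding C_def by (rule permutation_self_in_orbit[OF s])
    then have "card (S - C) < card S" using x by (intro psubset_card_mono[OF less.prems(1)]) blast
    moreover have "finite (S - C)" using less.prems(1) by simp
    moreover have "s ` (S - C) = S - C"
      using s less.prems(2) image_orbit_permutation[OF s]
      by (simp add: C_def image_set_diff permutation_bijective bij_is_inj)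
    moreover have "\<forall>y\<in>S - C. 4 dvd funpow_dist1 s y y" using less.prems(3) by simp
    ultimately have "\<exists>X'. X' \<inter> (s \<circ> s) ` X' = {} \<and> X' \<union> (s \<circ> s) ` X' = S - C"
      by (rule less.hyps)
    then obtain X' where X': "X' \<inter> (s \<circ> s) ` X' = {}" "X' \<union> (s \<circ> s) ` X' = S - C"
      by blast
    have "4 dvd funpow_dist1 s x x" using less.prems(3) x by blast
    then have "\<exists>X. X \<inter> (s \<circ> s) ` X = {} \<and> X \<union> (s \<circ> s) ` X = C"
      unfolding C_def by (rule exists_square_transversal_orbit[OF s])
    then obtain X where X: "X \<inter> (s \<circ> s) ` X = {}" "X \<union> (s \<circ> s) ` X = C"
      by blast
    have "X \<union> (s \<circ> s) ` X \<subseteq> C" "X' \<union> (s \<circ> s) ` X' \<subseteq> S - C" using X(2) X'(2) by simp_all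
    then have "(X \<union> X') \<inter> (s \<circ> s) ` (X \<union> X') = {}"
      using X(1) X'(1) unfolding image_Un by blast
    moreover have "(X \<union> X') \<union> (s \<circ> s) ` (X \<union> X') = S"
      using X(2) X'(2) \<open>C \<subseteq> S\<close> unfolding image_Un by blast
    ultimately show ?thesis by blast
  qed
qed

lemma antimorphism_period_four_dvd:
  assumes s: "signed_automorphism V E False s" and perm: "permutation s"
    and w: "w \<in> V" "s w = w" and x: "x \<in> V" "x \<noteq> w"
  shows "4 dvd funpow_dist1 s x x"
proof -
  define p where "p = funpow_dist1 s x x"
  have "x \<in> orbit s x" using perm by (rule permutation_self_in_orbit)
  then have period: "(s ^^ p) x = x" unfolding p_def by (rule funpow_dist1_prop)
  have "0 < p" unfolding p_def by simp
  have "(s ^^ n) w = w" for n by (induction n) (simp_all add: w(2))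
  \<comment> \<open>for odd \<open>p\<close>, the antimorphism \<open>s ^^ p\<close> would fix both ends of \<open>{x, w}\<close>\<close>
  then have "even p"
    using signed_automorphism_edge_iff[OF signed_automorphism_funpow[OF s, of p] x(1) w(1) x(2)]
      period by auto
  then obtain q where q: "p = q + q" by (metis evenE mult_2)
  \<comment> \<open>for odd \<open>q\<close>, the antimorphism \<open>s ^^ q\<close> would swap the ends of \<open>{x, (s ^^ q) x}\<close>\<close>
  have "even q"
  proof (rule ccontr)
    assume "odd q"
    define y where "y = (s ^^ q) x"
    have "y \<noteq> x"
      using funpow_dist1_least[of q s x x] \<open>0 < p\<close> q by (simp add: y_def p_def)
    have "(s ^^ q) y = x" unfolding y_def using period q by (simp add: funpow_add)
    have sq: "signed_automorphism V E False (s ^^ q)"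
      using signed_automorphism_funpow[OF s, of q] \<open>odd q\<close> by simp
    have "y \<in> V" unfolding y_def by (rule signed_automorphism_in[OF sq x(1)])
    have "{y, x} \<in> E \<longleftrightarrow> {x, y} \<notin> E"
      using signed_automorphism_edge_iff[OF sq x(1) \<open>y \<in> V\<close> \<open>y \<noteq> x\<close>[symmetric]]
        \<open>(s ^^ q) y = x\<close> by (simp add: y_def)
    then show False by (simp add: insert_commute)
  qed
  then show ?thesis using q by (auto simp: p_def)
qed

section \<open>Contracting the pairs of an automorphism\<close>

locale pair_contraction =
  fixes V :: "'a set" and E :: "'a set set" and g :: "'a \<Rightarrow> 'a" and X :: "'a set"
    and w :: 'a and k :: nat
  assumes finite_V: "finite V"
    and automorphism: "signed_automorphism V E True g"
    and disjoint: "X \<inter> g ` X = {}"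
    and cover: "X \<union> g ` X = V - {w}"
    and card_X_le: "card X \<le> k"
    and card_distinguishers_le: "\<And>x. x \<in> X \<Longrightarrow> card (distinguishers V E x (g x)) \<le> k"
begin

lemma X_Un_image_subset: "X \<union> g ` X \<subseteq> V"
  by (simp add: cover)

lemma mem_XD:
  assumes "x \<in> X"
  shows "x \<in> V" "g x \<in> V" "g x \<notin> X" "g x \<noteq> x"
proof -
  show "x \<in> V" "g x \<in> V" using assms X_Un_image_subset by auto
  show "g x \<notin> X" using assms disjoint by auto
  then show "g x \<noteq> x" using assms by auto
qed

lemma finite_X: "finite X"
  by (rule finite_subset[OF _ finite_V]) (use X_Un_image_subset in blast)

definition pair_partition :: "'a set \<Rightarrow> 'a set set" where
  "pair_partition Y = (\<lambda>y. {y, g y}) ` Y \<union> (\<lambda>z. {z}) ` (V - (Y \<union> g ` Y))"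

lemma pair_partition_empty: "pair_partition {} = singletons V"
  by (simp add: pair_partition_def singletons_def)

lemma card_pair_partition_le:
  assumes "Y \<subseteq> X"
  shows "card (pair_partition Y) \<le> card Y + card (V - (Y \<union> g ` Y))"
proof -
  have "finite Y" using assms finite_X by (rule finite_subset)
  then show ?thesis unfolding pair_partition_def
    using card_Un_le card_image_le finite_V by (smt (verit) add_mono finite_Diff order_trans)
qed

lemma card_pair_partition_X: "card (pair_partition X) \<le> k + 1"
proof -
  have "V - (X \<union> g ` X) \<subseteq> {w}" using cover by blast
  then have "card (V - (X \<union> g ` X)) \<le> 1" using card_mono[of "{w}"] by fastforce
  then show ?thesis using card_pair_partition_le[of X] card_X_le by simp
qed

lemma pair_partition_insert:
  assumes Y: "Y \<subseteq> X" and x: "x \<in> X" "x \<notin> Y"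
  shows "{x} \<in> pair_partition Y" "{g x} \<in> pair_partition Y" "{x} \<noteq> {g x}"
    and "pair_partition (insert x Y) = insert ({x} \<union> {g x}) (pair_partition Y - {{x}, {g x}})"
proof -
  note xX = mem_XD[OF x(1)]
  have "x \<notin> g ` Y" using x(1) Y disjoint by blast
  moreover have "g x \<notin> Y" using Y xX(3) by blast
  moreover have "g x \<notin> g ` Y"
    using x Y signed_automorphism_eq_iff[OF automorphism] mem_XD(1) by blast
  ultimately have "x \<in> V - (Y \<union> g ` Y)" "g x \<in> V - (Y \<union> g ` Y)" using xX x(2) by auto
  then show "{x} \<in> pair_partition Y" "{g x} \<in> pair_partition Y" "{x} \<noteq> {g x}"
    using xX(4) by (auto simp: pair_partition_def)
  have "{y, g y} \<notin> {{x}, {g x}}" if "y \<in> Y" for y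
    using that Y mem_XD(4) by fastforce
  then have "(\<lambda>y. {y, g y}) ` Y - {{x}, {g x}} = (\<lambda>y. {y, g y}) ` Y" by blast
  moreover have "(\<lambda>z. {z}) ` (V - (Y \<union> g ` Y)) - {{x}, {g x}} = (\<lambda>z. {z}) ` (V - (Y \<union> g ` Y) - {x, g x})"
    by auto
  moreover have "V - (insert x Y \<union> g ` insert x Y) = V - (Y \<union> g ` Y) - {x, g x}" by auto
  ultimately show "pair_partition (insert x Y) = insert ({x} \<union> {g x}) (pair_partition Y - {{x}, {g x}})"
    unfolding pair_partition_def by (simp add: Un_Diff insert_commute)
qed

lemma red_edge_meets_distinguishers:
  assumes Y: "Y \<subseteq> X" and y: "y \<in> Y"
    and W: "W \<in> pair_partition Y" "W \<noteq> {y, g y}" and red: "red_edge E {y, g y} W"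
  shows "W \<inter> distinguishers V E y (g y) \<noteq> {}"
proof -
  from W(1) consider (pair) a where "a \<in> Y" "W = {a, g a}"
    | (single) z where "z \<in> V - (Y \<union> g ` Y)" "W = {z}"
    by (auto simp: pair_partition_def)
  then show ?thesis
  proof cases
    case single
    then have "z \<in> distinguishers V E y (g y)"
      using red y by (auto simp: red_edge_def distinguishers_def)
    then show ?thesis using single by auto
  next
    case pair
    have "a \<noteq> y" using W(2) pair by auto
    moreover have "a \<noteq> g y" "g a \<noteq> y" using pair y Y mem_XD(3) by blast+
    moreover have "g a \<noteq> g y"
      using \<open>a \<noteq> y\<close> pair y Y signed_automorphism_eq_iff[OF automorphism] mem_XD(1) by blast
    \<comment> \<open>so if neither \<open>a\<close> nor \<open>g a\<close> distinguishes \<open>y\<close> from \<open>g y\<close>, all four pairs agree\<close>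
    moreover have "{g y, g a} \<in> E \<longleftrightarrow> {y, a} \<in> E"
      using signed_automorphism_edge_iff[OF automorphism, of y a] \<open>a \<noteq> y\<close> pair y Y mem_XD(1)
      by blast
    ultimately show ?thesis
      using red pair y Y mem_XD(1,2)
      by (auto simp: red_edge_def distinguishers_def insert_commute)
  qed
qed

lemma red_degree_pair_partition_le:
  assumes Y: "Y \<subseteq> X" and P: "partition_on V (pair_partition Y)" and U: "U \<in> pair_partition Y"
  shows "red_degree E (pair_partition Y) U \<le> k"
proof -
  have "finite Y" using Y finite_X by (rule finite_subset)
  have fin: "finite (pair_partition Y)" using finite_V P by (rule finite_elements)
  from U consider (pair) y where "y \<in> Y" "U = {y, g y}"
    | (single) z where "z \<in> V - (Y \<union> g ` Y)" "U = {z}"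
    by (auto simp: pair_partition_def)
  then show ?thesis
  proof cases
    case single
    have "{W \<in> pair_partition Y. W \<noteq> U \<and> red_edge E U W} \<subseteq> (\<lambda>y. {y, g y}) ` Y"
      using single by (auto simp: pair_partition_def red_edge_def)
    then have "red_degree E (pair_partition Y) U \<le> card ((\<lambda>y. {y, g y}) ` Y)"
      unfolding red_degree_def using \<open>finite Y\<close> by (intro card_mono) auto
    also have "\<dots> \<le> card X"
      using card_image_le[OF \<open>finite Y\<close>] card_mono[OF finite_X Y] by (rule order_trans)
    finally show ?thesis using card_X_le by simp
  next
    case pair
    have "{W \<in> pair_partition Y. W \<noteq> U \<and> red_edge E U W}
        \<subseteq> {W \<in> pair_partition Y. W \<inter> distinguishers V E y (g y) \<noteq> {}}"
      using red_edge_meets_distinguishers[OF Y pair(1)] pair(2) by blast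
    then have "red_degree E (pair_partition Y) U
        \<le> card {W \<in> pair_partition Y. W \<inter> distinguishers V E y (g y) \<noteq> {}}"
      unfolding red_degree_def using fin by (intro card_mono) auto
    also have "\<dots> \<le> card (distinguishers V E y (g y))"
      using P finite_V by (intro card_parts_meeting_le) (auto simp: distinguishers_def)
    also have "\<dots> \<le> k" using card_distinguishers_le pair(1) Y by blast
    finally show ?thesis .
  qed
qed

definition admissible :: "'a set set \<Rightarrow> bool" where
  "admissible P \<longleftrightarrow> partition_on V P \<and> (card P \<le> k + 1 \<or> (\<exists>Y\<subseteq>X. P = pair_partition Y))"

lemma admissible_max_red_degree_le:
  assumes "admissible P"
  shows "max_red_degree E P \<le> k"
proof -
  have P: "partition_on V P" "finite P"
    using assms finite_V finite_elements by (auto simp: admissible_def)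
  show ?thesis
  proof (cases "card P \<le> k + 1")
    case True
    have "red_degree E P U \<le> k" if "U \<in> P" for U
      using red_degree_le_card[OF P(2) that, of E] True by simp
    then show ?thesis by (intro max_red_degree_le[OF P(2)])
  next
    case False
    then obtain Y where "Y \<subseteq> X" "P = pair_partition Y" using assms by (auto simp: admissible_def)
    then show ?thesis using P red_degree_pair_partition_le by (intro max_red_degree_le) auto
  qed
qed

lemma admissible_cases:
  assumes "admissible P"
  shows "card P \<le> k + 1 \<or> (\<exists>Y\<subset>X. P = pair_partition Y)"
  using assms card_pair_partition_X unfolding admissible_def by (metis psubsetI)

lemma admissible_merge_step:
  assumes P: "admissible P" and "2 \<le> card P"
  shows "\<exists>Q. admissible Q \<and> merge_step P Q"
proof -
  have partition: "partition_on V P" and "finite P"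
    using P finite_V finite_elements by (auto simp: admissible_def)
  from admissible_cases[OF P] show ?thesis
  proof
    assume "\<exists>Y\<subset>X. P = pair_partition Y"
    then obtain Y where Y: "Y \<subset> X" "P = pair_partition Y" by blast
    obtain x where x: "x \<in> X" "x \<notin> Y" using psubset_imp_ex_mem[OF Y(1)] by blast
    note merge = pair_partition_insert[OF psubset_imp_subset[OF Y(1)] x]
    have "merge_step P (pair_partition (insert x Y))"
      unfolding Y(2) merge(4) by (rule merge_stepI[OF merge(1-3)])
    moreover have "partition_on V (pair_partition (insert x Y))"
      unfolding merge(4) using partition_on_merge[OF _ merge(1-3)] partition Y(2) by simp
    moreover have "insert x Y \<subseteq> X" using Y(1) x(1) by blast
    ultimately show ?thesis unfolding admissible_def by blast
  next
    assume "card P \<le> k + 1"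
    obtain U W where UW: "U \<in> P" "W \<in> P" "U \<noteq> W"
      using \<open>2 \<le> card P\<close> by (rule two_le_card_obtains)
    have "admissible (insert (U \<union> W) (P - {U, W}))"
      using partition_on_merge[OF partition UW] card_merge[OF partition \<open>finite P\<close> UW]
        \<open>card P \<le> k + 1\<close> unfolding admissible_def by linarith
    then show ?thesis using merge_stepI[OF UW] by blast
  qed
qed

lemma exists_contraction_sequence: "\<exists>Ps. contraction_sequence V Ps \<and> seq_width E Ps \<le> k"
proof (rule exists_contraction_sequence_from_invariant[OF finite_V])
  show "admissible (singletons V)"
    unfolding admissible_def using pair_partition_empty partition_on_singletons[of V]
    by (auto simp: singletons_def)
  show "partition_on V P" if "admissible P" for P using that by (simp add: admissible_def)
qed (fact admissible_max_red_degree_le admissible_merge_step)+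

end

section \<open>Self-complementary vertex- and edge-transitive graphs\<close>

locale sc_transitive_graph =
  fixes V :: "'a set" and E :: "'a set set"
  assumes simple: "simple_graph V E"
    and self_complementary: "self_complementary V E"
    and edge_transitive: "edge_transitive V E"
    and vertex_transitive: "vertex_transitive V E"
begin

lemma finite_V: "finite V"
  using simple by (simp add: simple_graph_def)

lemma exists_signed_automorphism_mapping:
  assumes u: "u \<in> V" and v: "v \<in> V"
  shows "\<exists>f. signed_automorphism V E b f \<and> f u = v"
proof (cases b)
  case True
  then show ?thesis
    using vertex_transitive u v automorphism_imp_signed_automorphism
    by (metis vertex_transitive_def)
next
  case False
  obtain s where s: "signed_automorphism V E False s"
    using self_complementary iso_complement_imp_signed_automorphism
    by (metis self_complementary_def)
  obtain h where h: "automorphism V E h" "h (s u) = v"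
    using vertex_transitive signed_automorphism_in[OF s u] v by (metis vertex_transitive_def)
  have "signed_automorphism V E False (h \<circ> s)"
    using signed_automorphism_comp[OF s automorphism_imp_signed_automorphism[OF h(1)]] by simp
  then show ?thesis using h(2) False by auto
qed

lemma card_signed_neighbours_eq:
  assumes "x \<in> V" "x' \<in> V"
  shows "card (signed_neighbours V E b x) = card (signed_neighbours V E b' x')"
proof -
  obtain f where f: "signed_automorphism V E (b = b') f" "f x = x'"
    using exists_signed_automorphism_mapping assms by blast
  have "((b = b') = b') = b" by blast
  then have "signed_neighbours V E b' x' = f ` signed_neighbours V E b x"
    using signed_automorphism_signed_neighbours[OF f(1) assms(1), of b'] f(2) by simp
  then show ?thesis
    using signed_automorphism_card_image[OF f(1)] by (simp add: signed_neighbours_def)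
qed

lemma card_signed_neighbours:
  assumes "x \<in> V"
  shows "card (signed_neighbours V E b x) = card V div 2"
proof -
  have fin: "finite (signed_neighbours V E c x)" for c
    using finite_V by (simp add: signed_neighbours_def)
  have "card (signed_neighbours V E True x) + card (signed_neighbours V E False x) = card (V - {x})"
    using card_Un_disjoint[OF fin fin signed_neighbours_Int] by (simp add: signed_neighbours_Un)
  moreover have "card (signed_neighbours V E True x) = card (signed_neighbours V E b x)"
    and "card (signed_neighbours V E False x) = card (signed_neighbours V E b x)"
    by (rule card_signed_neighbours_eq[OF assms assms])+
  moreover have "card (V - {x}) + 1 = card V"
    using card_Suc_Diff1[OF finite_V assms] by simp
  ultimately show ?thesis by presburger
qed

lemma card_distinguishers_eq_of_edges:
  assumes "{u, v} \<in> E" "{a, b} \<in> E"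
  shows "card (distinguishers V E u v) = card (distinguishers V E a b)"
proof -
  obtain f where f: "automorphism V E f" "f ` {a, b} = {u, v}"
    using edge_transitive assms by (meson edge_transitive_def)
  have ab: "a \<in> V" "b \<in> V" "a \<noteq> b"
    using simple assms(2) by (auto simp: simple_graph_def card_insert_if split: if_splits)
  note f' = automorphism_imp_signed_automorphism[OF f(1)]
  have "{f a, f b} = {u, v}" using f(2) by simp
  then have "distinguishers V E u v = distinguishers V E (f a) (f b)"
    using distinguishers_commute by (metis doubleton_eq_iff)
  also have "\<dots> = f ` distinguishers V E a b"
    by (rule signed_automorphism_distinguishers[OF f' ab])
  finally show ?thesis
    using signed_automorphism_card_image[OF f'] by (simp add: distinguishers_def)
qed

lemma card_distinguishers_eq:
  assumes "u \<in> V" "v \<in> V" "u \<noteq> v" "a \<in> V" "b \<in> V" "a \<noteq> b"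
  shows "card (distinguishers V E u v) = card (distinguishers V E a b)"
proof -
  obtain s where s: "signed_automorphism V E False s"
    using exists_signed_automorphism_mapping[of u u] assms(1) by blast
  have edge_rep: "\<exists>x y. {x, y} \<in> E \<and> card (distinguishers V E x y) = card (distinguishers V E u v)"
    if "u \<in> V" "v \<in> V" "u \<noteq> v" for u v
  proof (cases "{u, v} \<in> E")
    case False
    then have "{s u, s v} \<in> E" using signed_automorphism_edge_iff[OF s that] by simp
    moreover have "card (distinguishers V E (s u) (s v)) = card (distinguishers V E u v)"
      using signed_automorphism_distinguishers[OF s that] signed_automorphism_card_image[OF s]
      by (simp add: distinguishers_def)
    ultimately show ?thesis by blast
  qed blast
  show ?thesis
    using edge_rep[OF assms(1-3)] edge_rep[OF assms(4-6)] card_distinguishers_eq_of_edges by metis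
qed

lemma card_distinguishers:
  assumes uv: "u \<in> V" "v \<in> V" "u \<noteq> v"
  shows "card (distinguishers V E u v) = card V div 2"
proof -
  have "card (distinguishers V E u y) = card (distinguishers V E u v)" if "y \<in> V - {u}" for y
    using that card_distinguishers_eq[OF uv(1) _ _ uv, of y] by auto
  then have "(\<Sum>y\<in>V - {u}. card (distinguishers V E u y)) = (\<Sum>y\<in>V - {u}. card (distinguishers V E u v))"
    by (rule sum.cong[OF refl])
  then have "(card V - 1) * card (distinguishers V E u v) = (\<Sum>y\<in>V - {u}. card (distinguishers V E u y))"
    using finite_V uv(1) by simp
  also have "\<dots> = (\<Sum>z\<in>V - {u}. card (signed_neighbours V E ({u, z} \<notin> E) z))"
    by (rule sum_card_distinguishers[OF finite_V])
  also have "\<dots> = (card V - 1) * (card V div 2)"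
    using card_signed_neighbours finite_V uv(1) by simp
  finally have "(card V - 1) * card (distinguishers V E u v) = (card V - 1) * (card V div 2)" .
  moreover have "card {u, v} \<le> card V" using uv finite_V by (intro card_mono) auto
  ultimately show ?thesis using uv(3) by simp
qed

lemma exists_antimorphism_fixing:
  assumes w: "w \<in> V"
  shows "\<exists>s. signed_automorphism V E False s \<and> s permutes V \<and> s w = w"
proof -
  obtain f where f: "signed_automorphism V E False f" "f w = w"
    using exists_signed_automorphism_mapping[OF w w] by blast
  define s where "s y = (if y \<in> V then f y else y)" for y
  have "signed_automorphism V E False s"
    using f(1) by (rule signed_automorphism_cong) (simp add: s_def)
  moreover have "s permutes V"
    using signed_automorphism_bij[OF calculation] by (rule bij_imp_permutes) (simp add: s_def)
  ultimately show ?thesis using f(2) w by (intro exI[of _ s]) (simp add: s_def)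
qed

lemma exists_square_pairing:
  assumes w: "w \<in> V"
  shows "\<exists>g X. signed_automorphism V E True g \<and> X \<inter> g ` X = {} \<and> X \<union> g ` X = V - {w}"
proof -
  obtain s where s: "signed_automorphism V E False s" "s permutes V" "s w = w"
    using exists_antimorphism_fixing[OF w] by blast
  have perm: "permutation s" using s(2) finite_V permutation_permutes by blast
  have img: "s ` (V - {w}) = V - {w}"
    using permutes_image[OF s(2)] permutes_inj[OF s(2)] s(3) by (simp add: image_set_diff)
  have "\<forall>x\<in>V - {w}. 4 dvd funpow_dist1 s x x"
    using antimorphism_period_four_dvd[OF s(1) perm w s(3)] by simp
  then have "\<exists>X. X \<inter> (s \<circ> s) ` X = {} \<and> X \<union> (s \<circ> s) ` X = V - {w}"
    by (rule exists_square_transversal[OF perm finite_Diff[OF finite_V] img])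
  then obtain X where "X \<inter> (s \<circ> s) ` X = {}" "X \<union> (s \<circ> s) ` X = V - {w}"
    by blast
  moreover have "signed_automorphism V E True (s \<circ> s)"
    using signed_automorphism_comp[OF s(1) s(1)] by simp
  ultimately show ?thesis by (intro exI[of _ "s \<circ> s"] exI[of _ X]) simp
qed

lemma exists_contraction_sequence_width_half:
  "\<exists>Ps. contraction_sequence V Ps \<and> seq_width E Ps \<le> card V div 2"
proof (cases "V = {}")
  case True
  then show ?thesis by (intro exI[of _ "[]"]) (simp add: contraction_sequence_def seq_width_def)
next
  case False
  then obtain w where w: "w \<in> V" by blast
  then obtain g X where g: "signed_automorphism V E True g"
    and X: "X \<inter> g ` X = {}" "X \<union> g ` X = V - {w}"
    using exists_square_pairing by blast
  have XV: "X \<union> g ` X \<subseteq> V" using X(2) by blast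
  then have "finite X" using finite_V finite_subset by blast
  then have "card X + card (g ` X) = card V - 1"
    using card_Un_disjoint[OF _ _ X(1)] X(2) w by simp
  moreover have "card (g ` X) = card X"
    using XV signed_automorphism_card_image[OF g] by blast
  ultimately have "card X = card V div 2" by simp
  moreover have "card (distinguishers V E x (g x)) = card V div 2" if "x \<in> X" for x
    using that XV X(1) by (intro card_distinguishers) auto
  ultimately interpret pair_contraction V E g X w "card V div 2"
    using finite_V g X by unfold_locales auto
  show ?thesis by (rule exists_contraction_sequence)
qed

end

theorem mainTheorem8:
  fixes V :: "'a set" and E :: "'a set set"
  assumes "simple_graph V E"
    and "self_complementary V E"
    and "edge_transitive V E"
    and "vertex_transitive V E"
  shows "tww V E = lb1 V E"
proof -
  interpret sc_transitive_graph V E using assms by (rule sc_transitive_graph.intro)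
  obtain Ps where Ps: "contraction_sequence V Ps" "seq_width E Ps \<le> card V div 2"
    using exists_contraction_sequence_width_half by blast
  have "tww V E \<le> seq_width E Ps" by (rule tww_le_seq_width[OF finite_V Ps(1)])
  with Ps(2) have tww: "tww V E \<le> card V div 2" by simp
  show ?thesis
  proof (cases "2 \<le> card V")
    case True
    have "card V div 2 \<le> lb1 V E"
      using True card_distinguishers by (intro le_lb1I) auto
    moreover have "lb1 V E \<le> tww V E" by (rule lb1_le_tww[OF True Ps(1)])
    ultimately show ?thesis using tww by simp
  next
    case False
    then show ?thesis using tww by (simp add: lb1_def)
  qed
qed

end
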